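(* Let $(X,d)$ be an infinite compact metric space and $f_{1,\infty}=\{f_n\}_{n\ge1}$ a sequence of maps $X\to X$ each of which is an isometry. Then $(X,f_{1,\infty})$ does not satisfy Banks's condition.
   Context: Write $f_1^n=f_n\circ\cdots\circ f_1$. $(X,f_{1,\infty})$ satisfies Banks's condition if for any three non-empty open sets $U,V,W\subseteq X$ there is $n\in\mathbb{N}$ with $f_1^n(U)\cap V\neq\emptyset$ and $f_1^n(U)\cap W\ne\emptyset$. *)

theory Defs
  imports "HOL-Analysis.Analysis"
begin

fun seq_comp :: "(nat \<Rightarrow> 'a \<Rightarrow> 'a) \<Rightarrow> nat \<Rightarrow> 'a \<Rightarrow> 'a" where
  "seq_comp f 0 = id"
| "seq_comp f (Suc n) = f (Suc n) \<circ> seq_comp f n"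

definition banks_condition :: "'a::metric_space set \<Rightarrow> (nat \<Rightarrow> 'a \<Rightarrow> 'a) \<Rightarrow> bool" where
  "banks_condition X f \<longleftrightarrow>
     (\<forall>U V W. openin (top_of_set X) U \<and> U \<noteq> {} \<and>
              openin (top_of_set X) V \<and> V \<noteq> {} \<and>
              openin (top_of_set X) W \<and> W \<noteq> {} \<longrightarrow>
        (\<exists>n\<ge>1. seq_comp f n ` U \<inter> V \<noteq> {} \<and> seq_comp f n ` U \<inter> W \<noteq> {}))"

end

theory Submission
  imports Defs
begin

text \<open>Isometries do not increase distances, so f_1^n maps a ball U of radius r onto a set of
  diameter less than 2r. Taking two distinct points a, b of X and r = d(a,b)/4, the image of
  U = B(a,r) cannot meet both V = U and W = B(b,r).\<close>

lemma seq_comp_image_subset: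
  assumes "\<And>n. n \<ge> 1 \<Longrightarrow> f n ` X \<subseteq> X"
  shows "seq_comp f n ` X \<subseteq> X"
proof (induction n)
  case (Suc n)
  then show ?case using assms[of "Suc n"] by (auto simp: image_subset_iff)
qed simp

lemma seq_comp_nonexpansive:
  assumes "\<And>n. n \<ge> 1 \<Longrightarrow> f n ` X \<subseteq> X"
    and "\<And>n x y. n \<ge> 1 \<Longrightarrow> x \<in> X \<Longrightarrow> y \<in> X \<Longrightarrow> dist (f n x) (f n y) \<le> dist x y"
    and "x \<in> X" "y \<in> X"
  shows "dist (seq_comp f n x) (seq_comp f n y) \<le> dist x y"
proof (induction n)
  case (Suc n)
  have "seq_comp f n x \<in> X" "seq_comp f n y \<in> X"
    using seq_comp_image_subset[of f X n] assms(1,3,4) by blast+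
  then have "dist (seq_comp f (Suc n) x) (seq_comp f (Suc n) y)
      \<le> dist (seq_comp f n x) (seq_comp f n y)"
    using assms(2)[of "Suc n"] by simp
  with Suc show ?case by linarith
qed simp

lemma not_banks_condition_nonexpansive:
  fixes X :: "'a::metric_space set"
  assumes "a \<in> X" "b \<in> X" "a \<noteq> b"
    and "\<And>n. n \<ge> 1 \<Longrightarrow> f n ` X \<subseteq> X"
    and "\<And>n x y. n \<ge> 1 \<Longrightarrow> x \<in> X \<Longrightarrow> y \<in> X \<Longrightarrow> dist (f n x) (f n y) \<le> dist x y"
  shows "\<not> banks_condition X f"
proof
  assume "banks_condition X f"
  define r where "r = dist a b / 4"
  have "r > 0" using assms(3) by (simp add: r_def)
  define U where "U = ball a r \<inter> X"
  define W where "W = ball b r \<inter> X"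
  have "openin (top_of_set X) U" "openin (top_of_set X) W"
    by (simp_all add: U_def W_def openin_open_Int Int_commute)
  moreover have "U \<noteq> {}" "W \<noteq> {}"
    using assms(1,2) \<open>r > 0\<close> by (metis U_def W_def IntI centre_in_ball empty_iff)+
  ultimately obtain n where "seq_comp f n ` U \<inter> U \<noteq> {}" "seq_comp f n ` U \<inter> W \<noteq> {}"
    using \<open>banks_condition X f\<close> unfolding banks_condition_def by blast
  then obtain u v where u: "u \<in> U" "seq_comp f n u \<in> U" and v: "v \<in> U" "seq_comp f n v \<in> W"
    by blast
  have "dist (seq_comp f n u) (seq_comp f n v) \<le> dist u v"
    using seq_comp_nonexpansive[of f X] assms(4,5) u v by (simp add: U_def)
  also have "\<dots> \<le> dist u a + dist a v" by (rule dist_triangle)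
  also have "\<dots> < 2 * r" using u v by (simp add: U_def dist_commute)
  finally have "dist (seq_comp f n u) (seq_comp f n v) < 2 * r" .
  moreover have "dist a b \<le> dist a (seq_comp f n u)
      + dist (seq_comp f n u) (seq_comp f n v) + dist (seq_comp f n v) b"
    by (smt (verit) dist_triangle)
  moreover have "dist a (seq_comp f n u) < r" "dist (seq_comp f n v) b < r"
    using u v by (simp_all add: U_def W_def dist_commute)
  ultimately show False by (simp add: r_def)
qed

theorem lemma4p5:
  fixes X :: "'a::metric_space set" and f :: "nat \<Rightarrow> 'a \<Rightarrow> 'a"
  assumes "compact X" and "infinite X"
    and "\<And>n. n \<ge> 1 \<Longrightarrow> f n ` X \<subseteq> X"
    and "\<And>n x y. n \<ge> 1 \<Longrightarrow> x \<in> X \<Longrightarrow> y \<in> X \<Longrightarrow> dist (f n x) (f n y) = dist x y"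
  shows "\<not> banks_condition X f"
proof -
  obtain a b where "a \<in> X" "b \<in> X" "a \<noteq> b"
    using \<open>infinite X\<close> by (metis finite.emptyI finite_insert insertCI subsetI finite_subset)
  then show ?thesis
    using not_banks_condition_nonexpansive[of a X b f] assms(3,4) by simp
qed

end
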